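(* Let $R$ be an absolutely integrally closed ring, $D$ an integral domain, and $\varphi: R\to D$ an integral ring homomorphism. Then $\varphi$ is surjective and $D$ is an absolutely integrally closed domain.
   Context: All rings are commutative with $1$ and ring maps preserve $1$. An integral domain $A$ is absolutely integrally closed if $A$ is integrally closed in its field of fractions $K$ and $K$ is algebraically closed. A ring $R$ is absolutely integrally closed if $R\cong A_1\times\cdots\times A_n$ for finitely many absolutely integrally closed domains $A_1,\dots,A_n$. A ring map $\varphi: R\to D$ is integral if every element of $D$ is integral over $\varphi(R)$. *)

theory Defs
  imports "HOL-Algebra.Algebraic_Closure" "HOL-Algebra.Chinese_Remainder"
begin

text \<open>x is integral over the subset S of the ring R: x is a root of a monic
  polynomial (leading coefficient one)
  with coefficients in S.  Polynomials are coefficient lists, highest first.\<close>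
definition integral_over :: "('a, 'm) ring_scheme \<Rightarrow> 'a set \<Rightarrow> 'a \<Rightarrow> bool" where
  "integral_over R S x \<longleftrightarrow>
     (\<exists>p. polynomial\<^bsub>R\<^esub> S p \<and> p \<noteq> [] \<and> lead_coeff p = \<one>\<^bsub>R\<^esub> \<and> ring.eval R p x = \<zero>\<^bsub>R\<^esub>)"

definition integral_hom :: "('a, 'm) ring_scheme \<Rightarrow> ('b, 'n) ring_scheme \<Rightarrow> ('a \<Rightarrow> 'b) \<Rightarrow> bool" where
  "integral_hom R D \<phi> \<longleftrightarrow> (\<forall>d \<in> carrier D. integral_over D (\<phi> ` carrier R) d)"

definition is_fraction_field :: "('a, 'm) ring_scheme \<Rightarrow> ('b, 'n) ring_scheme \<Rightarrow> ('a \<Rightarrow> 'b) \<Rightarrow> bool" where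
  "is_fraction_field A K \<iota> \<longleftrightarrow>
     domain A \<and> field K \<and> \<iota> \<in> ring_hom A K \<and> inj_on \<iota> (carrier A) \<and>
     (\<forall>k \<in> carrier K. \<exists>a \<in> carrier A. \<exists>b \<in> carrier A. b \<noteq> \<zero>\<^bsub>A\<^esub> \<and>
        k = \<iota> a \<otimes>\<^bsub>K\<^esub> inv\<^bsub>K\<^esub> (\<iota> b))"

text \<open>The field of fractions is unique up to isomorphism;
  a copy always exists with carrier of type ('a * 'a) set (classes of pairs).\<close>
definition aic_domain :: "('a, 'm) ring_scheme \<Rightarrow> bool" where
  "aic_domain A \<longleftrightarrow> domain A \<and>
     (\<exists>(K :: ('a \<times> 'a) set ring) \<iota>. is_fraction_field A K \<iota> \<and>
        (\<forall>k \<in> carrier K. integral_over K (\<iota> ` carrier A) k \<longrightarrow> k \<in> \<iota> ` carrier A) \<and>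
        algebraically_closed K)"

text \<open>Each factor is isomorphic to a quotient of R, hence
  can be taken with carrier of type 'a set set.\<close>
definition aic_ring :: "('a, 'm) ring_scheme \<Rightarrow> bool" where
  "aic_ring R \<longleftrightarrow>
     (\<exists>As :: ('a set) ring list. (\<forall>A \<in> set As. aic_domain A) \<and> R \<simeq> RDirProd_list As)"

end

theory Submission
  imports Defs
begin

text \<open>
  The proof rests on the characterization of absolutely integrally closed domains as
  the domains in which every monic polynomial of positive degree has a root (the
  "monic roots" property, lemma \<open>aic_domain_iff_monic_roots\<close>).  Hence integral homs out of such \<open>A\<close> are surjective,
    and the monic roots property passes to the target.
  \<^item> For the characterization, fields with monic roots are algebraically closed; monic
    roots pass from a domain to its field of fractions (clear denominators) and make
    the domain integrally closed there.
  The main theorem then reduces to one factor of \<open>R\<close> and applies these facts.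
\<close>

lemma RDirProd_simps [simp]:
  "carrier (RDirProd R S) = carrier R \<times> carrier S"
  "(x, y) \<otimes>\<^bsub>RDirProd R S\<^esub> (x', y') = (x \<otimes>\<^bsub>R\<^esub> x', y \<otimes>\<^bsub>S\<^esub> y')"
  "(x, y) \<oplus>\<^bsub>RDirProd R S\<^esub> (x', y') = (x \<oplus>\<^bsub>R\<^esub> x', y \<oplus>\<^bsub>S\<^esub> y')"
  "\<one>\<^bsub>RDirProd R S\<^esub> = (\<one>\<^bsub>R\<^esub>, \<one>\<^bsub>S\<^esub>)"
  "\<zero>\<^bsub>RDirProd R S\<^esub> = (\<zero>\<^bsub>R\<^esub>, \<zero>\<^bsub>S\<^esub>)"
  by (simp_all add: RDirProd_def DirProd_def monoid.defs)

lemma (in domain) idempotent_cases: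
  assumes "x \<in> carrier R" "x \<otimes> x = x"
  shows "x = \<zero> \<or> x = \<one>"
  using m_lcancel[of x x \<one>] assms by auto

lemma ring_hom_through_corner:
  assumes S: "ring S" and D: "ring D" and \<psi>: "\<psi> \<in> ring_hom Q D"
    and j_closed: "\<And>s. s \<in> carrier S \<Longrightarrow> j s \<in> carrier Q"
    and j_mult: "\<And>s t. s \<in> carrier S \<Longrightarrow> t \<in> carrier S \<Longrightarrow> j (s \<otimes>\<^bsub>S\<^esub> t) = j s \<otimes>\<^bsub>Q\<^esub> j t"
    and j_add: "\<And>s t. s \<in> carrier S \<Longrightarrow> t \<in> carrier S \<Longrightarrow> j (s \<oplus>\<^bsub>S\<^esub> t) = j s \<oplus>\<^bsub>Q\<^esub> j t"
    and e_one: "\<psi> (j \<one>\<^bsub>S\<^esub>) = \<one>\<^bsub>D\<^esub>"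
    and corner: "\<And>q. q \<in> carrier Q \<Longrightarrow> \<exists>s\<in>carrier S. q \<otimes>\<^bsub>Q\<^esub> j \<one>\<^bsub>S\<^esub> = j s"
  shows "\<psi> \<circ> j \<in> ring_hom S D" and "(\<psi> \<circ> j) ` carrier S = \<psi> ` carrier Q"
proof -
  interpret D: ring D by (rule D)
  show "\<psi> \<circ> j \<in> ring_hom S D"
  proof (rule ring_hom_memI)
    fix s assume "s \<in> carrier S"
    then show "(\<psi> \<circ> j) s \<in> carrier D" using ring_hom_closed[OF \<psi>] j_closed by simp
  next
    fix s t assume st: "s \<in> carrier S" "t \<in> carrier S"
    then show "(\<psi> \<circ> j) (s \<otimes>\<^bsub>S\<^esub> t) = (\<psi> \<circ> j) s \<otimes>\<^bsub>D\<^esub> (\<psi> \<circ> j) t"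
      using ring_hom_mult[OF \<psi> j_closed j_closed] j_mult by simp
  next
    fix s t assume st: "s \<in> carrier S" "t \<in> carrier S"
    then show "(\<psi> \<circ> j) (s \<oplus>\<^bsub>S\<^esub> t) = (\<psi> \<circ> j) s \<oplus>\<^bsub>D\<^esub> (\<psi> \<circ> j) t"
      using ring_hom_add[OF \<psi> j_closed j_closed] j_add by simp
  qed (simp add: e_one)
  show "(\<psi> \<circ> j) ` carrier S = \<psi> ` carrier Q"
  proof
    show "(\<psi> \<circ> j) ` carrier S \<subseteq> \<psi> ` carrier Q" using j_closed by auto
  next
    show "\<psi> ` carrier Q \<subseteq> (\<psi> \<circ> j) ` carrier S"
    proof
      fix z assume "z \<in> \<psi> ` carrier Q"
      then obtain q where q: "q \<in> carrier Q" "z = \<psi> q" by blast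
      obtain s where s: "s \<in> carrier S" "q \<otimes>\<^bsub>Q\<^esub> j \<one>\<^bsub>S\<^esub> = j s"
        using corner[OF q(1)] by blast
      have e: "j \<one>\<^bsub>S\<^esub> \<in> carrier Q" using j_closed ring.ring_simprules(6)[OF S] .
      have "\<psi> q = \<psi> q \<otimes>\<^bsub>D\<^esub> \<psi> (j \<one>\<^bsub>S\<^esub>)"
        using e_one ring_hom_closed[OF \<psi> q(1)] by simp
      also have "\<dots> = \<psi> (j s)" using ring_hom_mult[OF \<psi> q(1) e] s(2) by simp
      finally show "z \<in> (\<psi> \<circ> j) ` carrier S" using q(2) s(1) by auto
    qed
  qed
qed

text \<open>A ring hom from a product \<open>A \<times> B\<close> into a domain kills one of the idempotents
  \<open>(\<one>, \<zero>)\<close>, \<open>(\<zero>, \<one>)\<close>, so it factors through a projection: its image is already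
  the image of a ring hom defined on one of the two factors.\<close>
lemma ring_hom_RDirProd_factor:
  assumes A: "ring A" and B: "ring B" and D: "domain D"
    and \<psi>: "\<psi> \<in> ring_hom (RDirProd A B) D"
  shows "(\<exists>\<theta>\<in>ring_hom A D. \<theta> ` carrier A = \<psi> ` carrier (RDirProd A B)) \<or>
         (\<exists>\<theta>\<in>ring_hom B D. \<theta> ` carrier B = \<psi> ` carrier (RDirProd A B))"
proof -
  interpret A: ring A by (rule A)
  interpret B: ring B by (rule B)
  interpret D: domain D by (rule D)
  let ?Q = "RDirProd A B" and ?e = "(\<one>\<^bsub>A\<^esub>, \<zero>\<^bsub>B\<^esub>)" and ?f = "(\<zero>\<^bsub>A\<^esub>, \<one>\<^bsub>B\<^esub>)"
  have eQ: "?e \<in> carrier ?Q" and fQ: "?f \<in> carrier ?Q" by auto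
  have "\<psi> ?e \<otimes>\<^bsub>D\<^esub> \<psi> ?e = \<psi> ?e" using ring_hom_mult[OF \<psi> eQ eQ] by simp
  then have e_cases: "\<psi> ?e = \<zero>\<^bsub>D\<^esub> \<or> \<psi> ?e = \<one>\<^bsub>D\<^esub>"
    using D.idempotent_cases ring_hom_closed[OF \<psi> eQ] by blast
  have "\<psi> ?e \<oplus>\<^bsub>D\<^esub> \<psi> ?f = \<one>\<^bsub>D\<^esub>"
    using ring_hom_add[OF \<psi> eQ fQ] ring_hom_one[OF \<psi>] by simp
  then have "\<psi> ?e = \<one>\<^bsub>D\<^esub> \<or> \<psi> ?f = \<one>\<^bsub>D\<^esub>"
    using e_cases ring_hom_closed[OF \<psi> fQ] by auto
  then show ?thesis
  proof
    assume "\<psi> ?e = \<one>\<^bsub>D\<^esub>"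
    moreover have "\<exists>s\<in>carrier A. q \<otimes>\<^bsub>?Q\<^esub> ?e = (s, \<zero>\<^bsub>B\<^esub>)" if "q \<in> carrier ?Q" for q
      using that by auto
    ultimately have hom: "\<psi> \<circ> (\<lambda>a. (a, \<zero>\<^bsub>B\<^esub>)) \<in> ring_hom A D"
      and im: "(\<psi> \<circ> (\<lambda>a. (a, \<zero>\<^bsub>B\<^esub>))) ` carrier A = \<psi> ` carrier ?Q"
      using ring_hom_through_corner[OF A D.ring_axioms \<psi>, of "\<lambda>a. (a, \<zero>\<^bsub>B\<^esub>)"] by simp_all
    have "\<exists>\<theta>\<in>ring_hom A D. \<theta> ` carrier A = \<psi> ` carrier ?Q" using im hom by (rule bexI)
    then show ?thesis by (rule disjI1)
  next
    assume "\<psi> ?f = \<one>\<^bsub>D\<^esub>"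
    moreover have "\<exists>s\<in>carrier B. q \<otimes>\<^bsub>?Q\<^esub> ?f = (\<zero>\<^bsub>A\<^esub>, s)" if "q \<in> carrier ?Q" for q
      using that by auto
    ultimately have hom: "\<psi> \<circ> (\<lambda>b. (\<zero>\<^bsub>A\<^esub>, b)) \<in> ring_hom B D"
      and im: "(\<psi> \<circ> (\<lambda>b. (\<zero>\<^bsub>A\<^esub>, b))) ` carrier B = \<psi> ` carrier ?Q"
      using ring_hom_through_corner[OF B D.ring_axioms \<psi>, of "\<lambda>b. (\<zero>\<^bsub>A\<^esub>, b)"] by simp_all
    have "\<exists>\<theta>\<in>ring_hom B D. \<theta> ` carrier B = \<psi> ` carrier ?Q" using im hom by (rule bexI)
    then show ?thesis by (rule disjI2)
  qed
qed

text \<open>Iterating: a ring hom from a finite product of rings into a domain has the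
  same image as a ring hom from one of the factors.  (The empty product is the
  zero ring, which admits no ring hom into a domain.)\<close>
lemma ring_hom_RDirProd_list_factor:
  assumes "\<forall>A\<in>set As. ring A" and "\<psi> \<in> ring_hom (RDirProd_list As) D" and D: "domain D"
  shows "\<exists>A\<in>set As. \<exists>\<theta>\<in>ring_hom A D. \<theta> ` carrier A = \<psi> ` carrier (RDirProd_list As)"
  using assms(1,2)
proof (induction As arbitrary: \<psi>)
  case Nil
  interpret D: domain D by (rule D)
  have "\<psi> [] = \<one>\<^bsub>D\<^esub>" using ring_hom_one[OF Nil(2)] by (simp add: monoid.defs)
  moreover have "\<psi> ([] \<oplus>\<^bsub>RDirProd_list []\<^esub> []) = \<psi> [] \<oplus>\<^bsub>D\<^esub> \<psi> []"
    using ring_hom_add[OF Nil(2)] by (simp add: monoid.defs)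
  ultimately have "\<one>\<^bsub>D\<^esub> = \<one>\<^bsub>D\<^esub> \<oplus>\<^bsub>D\<^esub> \<one>\<^bsub>D\<^esub>" by (simp add: monoid.defs)
  then have "\<one>\<^bsub>D\<^esub> = \<zero>\<^bsub>D\<^esub>"
    by (metis D.l_zero D.one_closed D.r_zero D.zero_closed D.add.right_cancel)
  then show ?case using D.one_not_zero by simp
next
  case (Cons A As)
  let ?P = "RDirProd_list As"
  let ?cons = "\<lambda>(a, as). a # as"
  have rings: "ring A" "ring ?P"
    using Cons.prems(1) by (simp, intro RDirProd_list_is_ring) auto
  have \<psi>': "\<psi> \<circ> ?cons \<in> ring_hom (RDirProd A ?P) D"
    by (rule ring_hom_trans[OF RDirProd_list_hom1 Cons.prems(2)])
  have img: "(\<psi> \<circ> ?cons) ` carrier (RDirProd A ?P) = \<psi> ` carrier (RDirProd_list (A # As))"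
    unfolding image_comp[symmetric] RDirProd_list_carrier[of A As] by (simp add: case_prod_unfold)
  from ring_hom_RDirProd_factor[OF rings D \<psi>'] show ?case
  proof
    assume "\<exists>\<theta>\<in>ring_hom A D. \<theta> ` carrier A = (\<psi> \<circ> ?cons) ` carrier (RDirProd A ?P)"
    then show ?case using img by auto
  next
    assume "\<exists>\<theta>\<in>ring_hom ?P D. \<theta> ` carrier ?P = (\<psi> \<circ> ?cons) ` carrier (RDirProd A ?P)"
    then obtain \<theta> where "\<theta> \<in> ring_hom ?P D" "\<theta> ` carrier ?P = \<psi> ` carrier (RDirProd_list (A # As))"
      using img by auto
    then show ?case using Cons.IH[of \<theta>] Cons.prems(1) by auto
  qed
qed

text \<open>Polynomials are
  coefficient lists, leading coefficient first, so "monic of positive degree" means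
  a list of length at least two with head \<open>\<one>\<close>.\<close>
definition monic_roots :: "('a, 'm) ring_scheme \<Rightarrow> bool" where
  "monic_roots A \<longleftrightarrow> (\<forall>q. set q \<subseteq> carrier A \<and> q \<noteq> [] \<and> hd q = \<one>\<^bsub>A\<^esub> \<and> length q \<ge> 2 \<longrightarrow>
      (\<exists>a\<in>carrier A. ring.eval A q a = \<zero>\<^bsub>A\<^esub>))"

lemma lift_monic:
  assumes A: "ring A" and h: "h \<in> ring_hom A B"
    and p: "p \<noteq> []" "hd p = \<one>\<^bsub>B\<^esub>" "set (tl p) \<subseteq> h ` carrier A"
  obtains q where "set q \<subseteq> carrier A" "q \<noteq> []" "hd q = \<one>\<^bsub>A\<^esub>" "map h q = p" "length q = length p"
proof -
  let ?q = "\<one>\<^bsub>A\<^esub> # map (inv_into (carrier A) h) (tl p)"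
  have "\<one>\<^bsub>A\<^esub> \<in> carrier A" using A by (simp add: ring.ring_simprules)
  then have "set ?q \<subseteq> carrier A" using p(3) by (auto intro: inv_into_into)
  moreover have "?q \<noteq> []" and "hd ?q = \<one>\<^bsub>A\<^esub>" by simp_all
  moreover have "map h ?q = p"
  proof -
    have "map (h \<circ> inv_into (carrier A) h) (tl p) = tl p"
      using p(3) by (intro map_idI) (auto simp: f_inv_into_f)
    moreover have "h \<one>\<^bsub>A\<^esub> = \<one>\<^bsub>B\<^esub>" using ring_hom_one[OF h] .
    ultimately show ?thesis using p(1,2) by (cases p) auto
  qed
  moreover have "length ?q = length p" using p(1) by (cases p) auto
  ultimately show ?thesis by (rule that)
qed

lemma (in domain) monic_linear_factor:
  assumes q: "set q \<subseteq> carrier R" "q \<noteq> []" "hd q = \<one>" and a: "a \<in> carrier R" "eval q a = \<zero>"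
  obtains c where "set c \<subseteq> carrier R" "c \<noteq> []" "hd c = \<one>" "length c < length q"
    "q = poly_mult [\<one>, \<ominus> a] c"
proof -
  have q_poly: "q \<in> carrier (poly_ring R)"
    using q unfolding sym[OF univ_poly_carrier] polynomial_def by auto
  have "is_root q a" using a q unfolding is_root_def by auto
  then have "[\<one>, \<ominus> a] pdivides q" using is_root_imp_pdivides[OF q_poly] by blast
  then obtain c where c: "c \<in> carrier (poly_ring R)" "q = poly_mult [\<one>, \<ominus> a] c"
    unfolding pdivides_def factor_def univ_poly_mult by blast
  have c_poly: "polynomial (carrier R) c" using c(1) univ_poly_carrier by blast
  have l_poly: "polynomial (carrier R) [\<one>, \<ominus> a]" using a unfolding polynomial_def by auto
  have c_set: "set c \<subseteq> carrier R" using c_poly unfolding polynomial_def by auto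
  have c_ne: "c \<noteq> []" using c(2) q(2) poly_mult_zero(2)[of "[\<one>, \<ominus> a]"] a by auto
  have "degree q = 1 + degree c"
    using poly_mult_degree_eq[OF carrier_is_subring l_poly c_poly] c(2) c_ne by simp
  then have "length c < length q" using c_ne q(2) by (cases c) auto
  moreover have "hd q = \<one> \<otimes> hd c"
    using poly_mult_lead_coeff[OF carrier_is_subring l_poly c_poly] c(2) c_ne by simp
  then have "hd c = \<one>" using q(3) c_ne c_set by (cases c) auto
  ultimately show ?thesis using that c_set c_ne c(2) by blast
qed

lemma eval_map_poly_mult:
  assumes h: "h \<in> ring_hom A B" and A: "ring A" and B: "cring B"
    and pq: "set p \<subseteq> carrier A" "set q \<subseteq> carrier A" and x: "x \<in> carrier B"
  shows "ring.eval B (map h (ring.poly_mult A p q)) x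
       = ring.eval B (map h p) x \<otimes>\<^bsub>B\<^esub> ring.eval B (map h q) x"
proof -
  interpret B: cring B by (rule B)
  interpret H: ring_hom_ring A B h using ring_hom_ringI2[OF A B.ring_axioms h] .
  have map_set: "set (map h s) \<subseteq> carrier B" if "set s \<subseteq> carrier A" for s
    using that H.hom_closed by auto
  have "B.eval (map h (H.R.poly_mult p q)) x = B.eval (B.normalize (map h (H.R.poly_mult p q))) x"
    using B.eval_normalize[OF map_set[OF H.R.poly_mult_in_carrier[OF pq]] x] by simp
  also have "\<dots> = B.eval (B.poly_mult (map h p) (map h q)) x"
    using H.poly_mult_hom'[OF pq] by simp
  also have "\<dots> = B.eval (map h p) x \<otimes>\<^bsub>B\<^esub> B.eval (map h q) x"
    using B.eval_poly_mult[OF map_set[OF pq(1)] map_set[OF pq(2)] x] .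
  finally show ?thesis .
qed

text \<open>Then every root in \<open>B\<close> of the image of a monic polynomial over \<open>A\<close>
  lies in \<open>h(A)\<close>: the polynomial splits into linear factors over \<open>A\<close>, and one of the
  images of these factors must vanish at the root.\<close>
lemma monic_root_in_image:
  assumes A: "domain A" and B: "domain B" and h: "h \<in> ring_hom A B" and roots: "monic_roots A"
    and q: "set q \<subseteq> carrier A" "q \<noteq> []" "hd q = \<one>\<^bsub>A\<^esub>"
    and x: "x \<in> carrier B" "ring.eval B (map h q) x = \<zero>\<^bsub>B\<^esub>"
  shows "x \<in> h ` carrier A"
  using q x(2)
proof (induction "length q" arbitrary: q rule: less_induct)
  case less
  interpret A: domain A by (rule A)
  interpret B: domain B by (rule B)
  interpret H: ring_hom_ring A B h using ring_hom_ringI2[OF A.ring_axioms B.ring_axioms h] .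
  show ?case
  proof (cases "length q \<ge> 2")
    case False
    then have "q = [\<one>\<^bsub>A\<^esub>]" using less.prems(2,3) by (cases q) (auto simp: Suc_le_eq)
    then show ?thesis using less.prems(4) x(1) by simp
  next
    case True
    then obtain a where a: "a \<in> carrier A" "A.eval q a = \<zero>\<^bsub>A\<^esub>"
      using roots less.prems(1-3) unfolding monic_roots_def by blast
    obtain c where c: "set c \<subseteq> carrier A" "c \<noteq> []" "hd c = \<one>\<^bsub>A\<^esub>" "length c < length q"
      "q = A.poly_mult [\<one>\<^bsub>A\<^esub>, \<ominus>\<^bsub>A\<^esub> a] c"
      using A.monic_linear_factor[OF less.prems(1-3) a] by blast
    have lin_set: "set [\<one>\<^bsub>A\<^esub>, \<ominus>\<^bsub>A\<^esub> a] \<subseteq> carrier A" using a by auto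
    have "set (map h c) \<subseteq> carrier B" using c(1) H.hom_closed by auto
    then have c_val: "B.eval (map h c) x \<in> carrier B" using B.eval_in_carrier x(1) by blast
    have "(x \<ominus>\<^bsub>B\<^esub> h a) \<otimes>\<^bsub>B\<^esub> B.eval (map h c) x = B.eval (map h q) x"
      using eval_map_poly_mult[OF h A.ring_axioms B.cring_axioms lin_set c(1) x(1)] c(5) a x(1)
      by (simp add: B.minus_eq)
    then have "(x \<ominus>\<^bsub>B\<^esub> h a) \<otimes>\<^bsub>B\<^esub> B.eval (map h c) x = \<zero>\<^bsub>B\<^esub>"
      using less.prems(4) by simp
    moreover have "x \<ominus>\<^bsub>B\<^esub> h a \<in> carrier B" using a(1) x(1) by simp
    ultimately have "x \<ominus>\<^bsub>B\<^esub> h a = \<zero>\<^bsub>B\<^esub> \<or> B.eval (map h c) x = \<zero>\<^bsub>B\<^esub>"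
      using B.integral c_val by blast
    then show ?thesis
    proof
      assume "x \<ominus>\<^bsub>B\<^esub> h a = \<zero>\<^bsub>B\<^esub>"
      then show ?thesis using a(1) x(1) by simp
    next
      assume "B.eval (map h c) x = \<zero>\<^bsub>B\<^esub>"
      then show ?thesis using less.hyps[OF c(4) c(1-3)] by blast
    qed
  qed
qed

lemma monic_roots_surjective_image:
  assumes A: "ring A" and D: "ring D" and \<theta>: "\<theta> \<in> ring_hom A D"
    and surj: "\<theta> ` carrier A = carrier D" and roots: "monic_roots A"
  shows "monic_roots D"
  unfolding monic_roots_def
proof (intro allI impI, elim conjE)
  interpret H: ring_hom_ring A D \<theta> using ring_hom_ringI2[OF A D \<theta>] .
  fix p assume p: "set p \<subseteq> carrier D" "p \<noteq> []" "hd p = \<one>\<^bsub>D\<^esub>" "2 \<le> length p"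
  have "set (tl p) \<subseteq> \<theta> ` carrier A" using p(1,2) surj by (cases p) auto
  then obtain q where q: "set q \<subseteq> carrier A" "q \<noteq> []" "hd q = \<one>\<^bsub>A\<^esub>" "map \<theta> q = p"
      "length q = length p"
    using lift_monic[OF A \<theta> p(2,3)] by blast
  then obtain a where a: "a \<in> carrier A" "H.R.eval q a = \<zero>\<^bsub>A\<^esub>"
    using roots p(4) unfolding monic_roots_def by auto
  have "H.S.eval p (\<theta> a) = \<theta> (H.R.eval q a)" using H.eval_hom'[OF a(1) q(1)] q(4) by simp
  then show "\<exists>x\<in>carrier D. H.S.eval p x = \<zero>\<^bsub>D\<^esub>" using a H.hom_closed by auto
qed

text \<open>An integral ring hom from a domain with the monic roots property into a domain
  is surjective: every element of the target is a root of the image of a monic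
  polynomial.\<close>
lemma integral_hom_surjective:
  assumes A: "domain A" and roots: "monic_roots A" and D: "domain D" and \<theta>: "\<theta> \<in> ring_hom A D"
    and int: "\<forall>d\<in>carrier D. integral_over D (\<theta> ` carrier A) d"
  shows "\<theta> ` carrier A = carrier D"
proof
  show "\<theta> ` carrier A \<subseteq> carrier D" using ring_hom_closed[OF \<theta>] by auto
next
  show "carrier D \<subseteq> \<theta> ` carrier A"
  proof
    fix d assume d: "d \<in> carrier D"
    then obtain p where p: "polynomial\<^bsub>D\<^esub> (\<theta> ` carrier A) p" "p \<noteq> []" "hd p = \<one>\<^bsub>D\<^esub>"
        "ring.eval D p d = \<zero>\<^bsub>D\<^esub>"
      using int unfolding integral_over_def by blast
    have "set (tl p) \<subseteq> \<theta> ` carrier A"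
      using p(1,2) unfolding polynomial_def by (cases p) auto
    then obtain q where "set q \<subseteq> carrier A" "q \<noteq> []" "hd q = \<one>\<^bsub>A\<^esub>" "map \<theta> q = p"
      using lift_monic[OF domain.axioms(1)[OF A, THEN cring.axioms(1)] \<theta> p(2,3)] by blast
    then show "d \<in> \<theta> ` carrier A"
      using monic_root_in_image[OF A D \<theta> roots _ _ _ d] p(4) by blast
  qed
qed

lemma (in ring) eval_smult:
  assumes "set p \<subseteq> carrier R" "m \<in> carrier R" "x \<in> carrier R"
  shows "eval (map (\<lambda>y. m \<otimes> y) p) x = m \<otimes> eval p x"
  using assms(1)
proof (induct p)
  case Nil then show ?case using assms by simp
next
  case (Cons c p)
  then have "eval (map (\<lambda>y. m \<otimes> y) (c # p)) x = (m \<otimes> c) \<otimes> x [^] length p \<oplus> m \<otimes> eval p x"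
    by simp
  also have "\<dots> = m \<otimes> (c \<otimes> x [^] length p \<oplus> eval p x)"
    using Cons assms eval_in_carrier[of p x] by (simp add: r_distr m_assoc)
  finally show ?case by simp
qed

text \<open>A field is algebraically closed iff it has the monic roots property.  One direction
  reads off a root from the splitting of the polynomial; for the other, divide by the
  leading coefficient.\<close>
lemma algebraically_closed_monic_roots:
  fixes K :: "('a, 'b) ring_scheme"
  assumes "algebraically_closed K"
  shows "monic_roots K"
  unfolding monic_roots_def
proof (intro allI impI, elim conjE)
  interpret algebraically_closed K by (rule assms)
  fix q :: "'a list" assume q: "set q \<subseteq> carrier K" "q \<noteq> []" "hd q = \<one>\<^bsub>K\<^esub>" "2 \<le> length q"
  have q_poly: "q \<in> carrier (poly_ring K)"
    unfolding sym[OF univ_poly_carrier] polynomial_def using q by auto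
  have "splitted q" using roots_over_carrier[OF q_poly] .
  then have "size (roots q) = length q - 1" unfolding splitted_def by simp
  then have "roots q \<noteq> {#}" using q(4) by auto
  then obtain x where "x \<in># roots q" by blast
  then have "is_root q x" using roots_mem_iff_is_root[OF q_poly] by blast
  then show "\<exists>x\<in>carrier K. eval q x = \<zero>\<^bsub>K\<^esub>" unfolding is_root_def by auto
qed

lemma field_monic_roots_algebraically_closed:
  assumes K: "field K" and roots: "monic_roots K"
  shows "algebraically_closed K"
proof -
  interpret K: field K by (rule K)
  show ?thesis
  proof (rule K.algebraically_closedI)
    fix p assume p: "p \<in> carrier (poly_ring K)" "degree p > 1"
    have p_ne: "p \<noteq> []" using p(2) by auto
    have "polynomial\<^bsub>K\<^esub> (carrier K) p" using p(1) univ_poly_carrier by blast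
    then have p_set: "set p \<subseteq> carrier K" and c: "hd p \<in> carrier K" "hd p \<noteq> \<zero>\<^bsub>K\<^esub>"
      using p_ne hd_in_set[OF p_ne] unfolding polynomial_def by auto
    let ?c = "hd p"
    have c_unit: "?c \<in> Units K" using c K.field_Units by auto
    let ?q = "map (\<lambda>y. inv\<^bsub>K\<^esub> ?c \<otimes>\<^bsub>K\<^esub> y) p"
    have "set ?q \<subseteq> carrier K" "?q \<noteq> []" "hd ?q = \<one>\<^bsub>K\<^esub>" "2 \<le> length ?q"
      using p_set p_ne c_unit p(2) by (auto simp: hd_map)
    then obtain x where x: "x \<in> carrier K" "K.eval ?q x = \<zero>\<^bsub>K\<^esub>"
      using roots unfolding monic_roots_def by blast
    then have "inv\<^bsub>K\<^esub> ?c \<otimes>\<^bsub>K\<^esub> K.eval p x = \<zero>\<^bsub>K\<^esub>"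
      using K.eval_smult[OF p_set _ x(1), of "inv\<^bsub>K\<^esub> ?c"] c_unit by simp
    then have "K.eval p x = \<zero>\<^bsub>K\<^esub>"
      using K.Units_l_inv[OF c_unit] K.Units_inv_closed[OF c_unit] K.eval_in_carrier[OF p_set x(1)]
      by (metis K.integral K.l_null K.one_not_zero c(1))
    then show "\<exists>x\<in>carrier K. K.eval p x = \<zero>\<^bsub>K\<^esub>" using x(1) by blast
  qed
qed

text \<open>An absolutely integrally closed domain has the monic roots property: a monic
  polynomial over \<open>A\<close> has a root in the algebraically closed fraction field; that root
  is integral over \<open>A\<close>, hence lies in \<open>A\<close>.\<close>
lemma aic_domain_monic_roots:
  assumes "aic_domain A" shows "monic_roots A"
proof -
  obtain K :: "('a \<times> 'a) set ring" and \<iota> where fr: "is_fraction_field A K \<iota>"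
    and closed: "\<forall>k \<in> carrier K. integral_over K (\<iota> ` carrier A) k \<longrightarrow> k \<in> \<iota> ` carrier A"
    and ac: "algebraically_closed K"
    using assms unfolding aic_domain_def by blast
  have A: "domain A" and h: "\<iota> \<in> ring_hom A K" and inj: "inj_on \<iota> (carrier A)"
    using fr unfolding is_fraction_field_def by auto
  interpret A: domain A by (rule A)
  interpret K: algebraically_closed K by (rule ac)
  interpret H: ring_hom_ring A K \<iota> using ring_hom_ringI2[OF A.ring_axioms K.ring_axioms h] .
  show ?thesis unfolding monic_roots_def
  proof (intro allI impI, elim conjE)
    fix q assume q: "set q \<subseteq> carrier A" "q \<noteq> []" "hd q = \<one>\<^bsub>A\<^esub>" "2 \<le> length q"
    let ?p = "map \<iota> q"
    have p: "set ?p \<subseteq> \<iota> ` carrier A" "?p \<noteq> []" "hd ?p = \<one>\<^bsub>K\<^esub>" "2 \<le> length ?p"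
      using q by (auto simp: hd_map)
    then have "set ?p \<subseteq> carrier K" using H.hom_closed by auto
    then obtain k where k: "k \<in> carrier K" "K.eval ?p k = \<zero>\<^bsub>K\<^esub>"
      using algebraically_closed_monic_roots[OF ac] p(2-4) unfolding monic_roots_def by blast
    have "integral_over K (\<iota> ` carrier A) k"
      unfolding integral_over_def
      by (rule exI[of _ ?p]) (use p k in \<open>auto simp: polynomial_def\<close>)
    then obtain a where a: "a \<in> carrier A" "k = \<iota> a" using closed k by blast
    have "\<iota> (A.eval q a) = \<iota> \<zero>\<^bsub>A\<^esub>" using H.eval_hom'[OF a(1) q(1)] k a by simp
    then have "A.eval q a = \<zero>\<^bsub>A\<^esub>"
      using inj A.eval_in_carrier[OF q(1) a(1)] unfolding inj_on_def by blast
    then show "\<exists>a\<in>carrier A. A.eval q a = \<zero>\<^bsub>A\<^esub>" using a by blast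
  qed
qed

text \<open>The field of fractions of a domain \<open>D\<close>, built as the set of equivalence classes
  of pairs \<open>(a, b)\<close> with \<open>b \<noteq> \<zero>\<close> under \<open>(a, b) \<sim> (c, d) \<longleftrightarrow> a d = c b\<close>.  Its
  elements are sets of pairs, of type \<open>('b \<times> 'b) set\<close>, as \<open>aic_domain\<close> requires.
  \<open>frac_class D a b\<close> is the class of \<open>a / b\<close>; operations work on chosen representatives.\<close>
definition frac_class :: "('b, 'm) ring_scheme \<Rightarrow> 'b \<Rightarrow> 'b \<Rightarrow> ('b \<times> 'b) set" where
  "frac_class D a b = {(c, d). c \<in> carrier D \<and> d \<in> carrier D \<and> d \<noteq> \<zero>\<^bsub>D\<^esub> \<and> a \<otimes>\<^bsub>D\<^esub> d = c \<otimes>\<^bsub>D\<^esub> b}"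

definition frac_carrier :: "('b, 'm) ring_scheme \<Rightarrow> ('b \<times> 'b) set set" where
  "frac_carrier D = {frac_class D a b | a b. a \<in> carrier D \<and> b \<in> carrier D \<and> b \<noteq> \<zero>\<^bsub>D\<^esub>}"

definition frac_rep :: "('b \<times> 'b) set \<Rightarrow> 'b \<times> 'b" where
  "frac_rep U = (SOME p. p \<in> U)"

definition frac_mult :: "('b, 'm) ring_scheme \<Rightarrow> ('b \<times> 'b) set \<Rightarrow> ('b \<times> 'b) set \<Rightarrow> ('b \<times> 'b) set" where
  "frac_mult D U V =
     frac_class D (fst (frac_rep U) \<otimes>\<^bsub>D\<^esub> fst (frac_rep V)) (snd (frac_rep U) \<otimes>\<^bsub>D\<^esub> snd (frac_rep V))"

definition frac_add :: "('b, 'm) ring_scheme \<Rightarrow> ('b \<times> 'b) set \<Rightarrow> ('b \<times> 'b) set \<Rightarrow> ('b \<times> 'b) set" where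
  "frac_add D U V =
     frac_class D (fst (frac_rep U) \<otimes>\<^bsub>D\<^esub> snd (frac_rep V) \<oplus>\<^bsub>D\<^esub> fst (frac_rep V) \<otimes>\<^bsub>D\<^esub> snd (frac_rep U))
            (snd (frac_rep U) \<otimes>\<^bsub>D\<^esub> snd (frac_rep V))"

definition frac_field :: "('b, 'm) ring_scheme \<Rightarrow> ('b \<times> 'b) set ring" where
  "frac_field D = \<lparr>carrier = frac_carrier D, monoid.mult = frac_mult D,
     one = frac_class D \<one>\<^bsub>D\<^esub> \<one>\<^bsub>D\<^esub>, zero = frac_class D \<zero>\<^bsub>D\<^esub> \<one>\<^bsub>D\<^esub>, add = frac_add D\<rparr>"

lemma frac_field_simps [simp]:
  "carrier (frac_field D) = frac_carrier D" "monoid.mult (frac_field D) = frac_mult D"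
  "one (frac_field D) = frac_class D \<one>\<^bsub>D\<^esub> \<one>\<^bsub>D\<^esub>" "zero (frac_field D) = frac_class D \<zero>\<^bsub>D\<^esub> \<one>\<^bsub>D\<^esub>"
  "add (frac_field D) = frac_add D"
  by (simp_all add: frac_field_def)

context domain begin

lemma frac_self:
  "a \<in> carrier R \<Longrightarrow> b \<in> carrier R \<Longrightarrow> b \<noteq> \<zero> \<Longrightarrow> (a, b) \<in> frac_class R a b"
  unfolding frac_class_def by auto

lemma frac_eq:
  assumes "a \<in> carrier R" "b \<in> carrier R" "c \<in> carrier R" "d \<in> carrier R" "b \<noteq> \<zero>" "d \<noteq> \<zero>"
  shows "frac_class R a b = frac_class R c d \<longleftrightarrow> a \<otimes> d = c \<otimes> b"
proof
  assume "frac_class R a b = frac_class R c d"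
  then have "(a, b) \<in> frac_class R c d" using frac_self assms by blast
  then show "a \<otimes> d = c \<otimes> b" unfolding frac_class_def using assms by (auto simp: m_comm)
next
  assume H: "a \<otimes> d = c \<otimes> b"
  have *: "frac_class R a b \<subseteq> frac_class R c d" if H: "a \<otimes> d = c \<otimes> b"
    and "a \<in> carrier R" "b \<in> carrier R" "c \<in> carrier R" "d \<in> carrier R" "b \<noteq> \<zero>" "d \<noteq> \<zero>" for a b c d
  proof
    fix p assume "p \<in> frac_class R a b"
    then obtain e f where p: "p = (e, f)" "e \<in> carrier R" "f \<in> carrier R" "f \<noteq> \<zero>" "a \<otimes> f = e \<otimes> b"
      unfolding frac_class_def by auto
    have "(c \<otimes> f) \<otimes> b = (e \<otimes> d) \<otimes> b"
    proof -
      have "(c \<otimes> f) \<otimes> b = f \<otimes> (c \<otimes> b)" using that(2-5) p(2,3) by algebra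
      also have "\<dots> = f \<otimes> (a \<otimes> d)" using H by simp
      also have "\<dots> = d \<otimes> (a \<otimes> f)" using that(2-5) p(2,3) by algebra
      also have "\<dots> = d \<otimes> (e \<otimes> b)" using p(5) by simp
      also have "\<dots> = (e \<otimes> d) \<otimes> b" using that(2-5) p(2,3) by algebra
      finally show ?thesis .
    qed
    then have "c \<otimes> f = e \<otimes> d" using that p
      by (metis m_closed m_comm m_lcancel)
    then show "p \<in> frac_class R c d" unfolding frac_class_def using p that by auto
  qed
  show "frac_class R a b = frac_class R c d"
    using *[OF H assms] *[of c b a d] H assms by (auto simp: m_comm)
qed

lemma frac_eqI:
  "a \<otimes> d = c \<otimes> b \<Longrightarrow> a \<in> carrier R \<Longrightarrow> b \<in> carrier R \<Longrightarrow> c \<in> carrier R \<Longrightarrow> d \<in> carrier R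
   \<Longrightarrow> b \<noteq> \<zero> \<Longrightarrow> d \<noteq> \<zero> \<Longrightarrow> frac_class R a b = frac_class R c d"
  using frac_eq by blast

lemma frac_rep_frac:
  assumes "a \<in> carrier R" "b \<in> carrier R" "b \<noteq> \<zero>"
  obtains c d where "frac_rep (frac_class R a b) = (c, d)" "c \<in> carrier R" "d \<in> carrier R" "d \<noteq> \<zero>"
    "a \<otimes> d = c \<otimes> b"
proof -
  have "frac_rep (frac_class R a b) \<in> frac_class R a b" unfolding frac_rep_def
    using frac_self[OF assms] by (rule someI)
  then show ?thesis using that unfolding frac_class_def by auto
qed

lemma frac_mult_frac:
  assumes "a \<in> carrier R" "b \<in> carrier R" "c \<in> carrier R" "d \<in> carrier R" "b \<noteq> \<zero>" "d \<noteq> \<zero>"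
  shows "frac_mult R (frac_class R a b) (frac_class R c d) = frac_class R (a \<otimes> c) (b \<otimes> d)"
proof -
  obtain a' b' where ab': "frac_rep (frac_class R a b) = (a', b')" "a' \<in> carrier R" "b' \<in> carrier R" "b' \<noteq> \<zero>"
    "a \<otimes> b' = a' \<otimes> b" using frac_rep_frac assms by metis
  obtain c' d' where cd': "frac_rep (frac_class R c d) = (c', d')" "c' \<in> carrier R" "d' \<in> carrier R" "d' \<noteq> \<zero>"
    "c \<otimes> d' = c' \<otimes> d" using frac_rep_frac assms by metis
  have "(a' \<otimes> c') \<otimes> (b \<otimes> d) = (a \<otimes> c) \<otimes> (b' \<otimes> d')"
  proof -
    have "(a' \<otimes> c') \<otimes> (b \<otimes> d) = (a' \<otimes> b) \<otimes> (c' \<otimes> d)" using ab'(2,3) cd'(2,3) assms(1-4) by algebra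
    also have "\<dots> = (a \<otimes> b') \<otimes> (c \<otimes> d')" by (simp only: ab'(5) cd'(5))
    also have "\<dots> = (a \<otimes> c) \<otimes> (b' \<otimes> d')" using ab'(2,3) cd'(2,3) assms(1-4) by algebra
    finally show ?thesis .
  qed
  then show ?thesis unfolding frac_mult_def ab' cd' fst_conv snd_conv
    by (rule frac_eqI) (use assms ab' cd' in \<open>auto simp: integral_iff\<close>)
qed

lemma frac_add_frac:
  assumes "a \<in> carrier R" "b \<in> carrier R" "c \<in> carrier R" "d \<in> carrier R" "b \<noteq> \<zero>" "d \<noteq> \<zero>"
  shows "frac_add R (frac_class R a b) (frac_class R c d) = frac_class R (a \<otimes> d \<oplus> c \<otimes> b) (b \<otimes> d)"
proof -
  obtain a' b' where ab': "frac_rep (frac_class R a b) = (a', b')" "a' \<in> carrier R" "b' \<in> carrier R" "b' \<noteq> \<zero>"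
    "a \<otimes> b' = a' \<otimes> b" using frac_rep_frac assms by metis
  obtain c' d' where cd': "frac_rep (frac_class R c d) = (c', d')" "c' \<in> carrier R" "d' \<in> carrier R" "d' \<noteq> \<zero>"
    "c \<otimes> d' = c' \<otimes> d" using frac_rep_frac assms by metis
  have "(a' \<otimes> d' \<oplus> c' \<otimes> b') \<otimes> (b \<otimes> d) = (a \<otimes> d \<oplus> c \<otimes> b) \<otimes> (b' \<otimes> d')"
  proof -
    have "(a' \<otimes> d' \<oplus> c' \<otimes> b') \<otimes> (b \<otimes> d) = (a' \<otimes> b) \<otimes> (d' \<otimes> d) \<oplus> (c' \<otimes> d) \<otimes> (b' \<otimes> b)"
      using ab'(2,3) cd'(2,3) assms(1-4) by algebra
    also have "\<dots> = (a \<otimes> b') \<otimes> (d' \<otimes> d) \<oplus> (c \<otimes> d') \<otimes> (b' \<otimes> b)" by (simp only: ab'(5) cd'(5))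
    also have "\<dots> = (a \<otimes> d \<oplus> c \<otimes> b) \<otimes> (b' \<otimes> d')" using ab'(2,3) cd'(2,3) assms(1-4) by algebra
    finally show ?thesis .
  qed
  then show ?thesis unfolding frac_add_def ab' cd' fst_conv snd_conv
    by (rule frac_eqI) (use assms ab' cd' in \<open>auto simp: integral_iff\<close>)
qed

lemma frac_carrierE:
  assumes "U \<in> frac_carrier R"
  obtains a b where "a \<in> carrier R" "b \<in> carrier R" "b \<noteq> \<zero>" "U = frac_class R a b"
  using assms unfolding frac_carrier_def by auto

lemma frac_in_carrier:
  "a \<in> carrier R \<Longrightarrow> b \<in> carrier R \<Longrightarrow> b \<noteq> \<zero> \<Longrightarrow> frac_class R a b \<in> frac_carrier R"
  unfolding frac_carrier_def by auto

lemma frac_field_abelian_group: "abelian_group (frac_field R)"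
proof (rule abelian_groupI, simp_all)
  fix x y assume "x \<in> frac_carrier R" "y \<in> frac_carrier R" then show "frac_add R x y \<in> frac_carrier R"
    by (elim frac_carrierE) (simp add: frac_add_frac frac_in_carrier integral_iff)
next
  show "frac_class R \<zero> \<one> \<in> frac_carrier R" by (simp add: frac_in_carrier)
next
  fix x y z assume "x \<in> frac_carrier R" "y \<in> frac_carrier R" "z \<in> frac_carrier R"
  then show "frac_add R (frac_add R x y) z = frac_add R x (frac_add R y z)"
    by (elim frac_carrierE) (simp add: frac_add_frac integral_iff, rule frac_eqI, algebra, simp_all add: integral_iff)
next
  fix x y assume "x \<in> frac_carrier R" "y \<in> frac_carrier R"
  then show "frac_add R x y = frac_add R y x"
    by (elim frac_carrierE) (simp add: frac_add_frac integral_iff, rule frac_eqI, algebra, simp_all add: integral_iff)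
next
  fix x assume "x \<in> frac_carrier R"
  then show "frac_add R (frac_class R \<zero> \<one>) x = x"
    by (elim frac_carrierE) (simp add: frac_add_frac integral_iff)
next
  fix x assume "x \<in> frac_carrier R"
  then show "\<exists>y\<in>frac_carrier R. frac_add R y x = frac_class R \<zero> \<one>"
  proof (elim frac_carrierE)
    fix a b assume ab: "a \<in> carrier R" "b \<in> carrier R" "b \<noteq> \<zero>" "x = frac_class R a b"
    have "frac_add R (frac_class R (\<ominus> a) b) x = frac_class R ((\<ominus> a) \<otimes> b \<oplus> a \<otimes> b) (b \<otimes> b)"
      using ab by (simp add: frac_add_frac)
    also have "\<dots> = frac_class R \<zero> \<one>"
      by (rule frac_eqI) (use ab in \<open>algebra\<close>, use ab in \<open>simp_all add: integral_iff\<close>)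
    finally have "frac_add R (frac_class R (\<ominus> a) b) x = frac_class R \<zero> \<one>" .
    then show ?thesis using ab frac_in_carrier[of "\<ominus> a" b] by auto
  qed
qed

lemma frac_field_comm_monoid: "comm_monoid (frac_field R)"
proof (rule comm_monoidI, simp_all)
  fix x y assume "x \<in> frac_carrier R" "y \<in> frac_carrier R" then show "frac_mult R x y \<in> frac_carrier R"
    by (elim frac_carrierE) (simp add: frac_mult_frac frac_in_carrier integral_iff)
next
  show "frac_class R \<one> \<one> \<in> frac_carrier R" by (simp add: frac_in_carrier)
next
  fix x y z assume "x \<in> frac_carrier R" "y \<in> frac_carrier R" "z \<in> frac_carrier R"
  then show "frac_mult R (frac_mult R x y) z = frac_mult R x (frac_mult R y z)"
    by (elim frac_carrierE) (simp add: frac_mult_frac integral_iff, rule frac_eqI, algebra, simp_all add: integral_iff)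
next
  fix x y assume "x \<in> frac_carrier R" "y \<in> frac_carrier R"
  then show "frac_mult R x y = frac_mult R y x"
    by (elim frac_carrierE) (simp add: frac_mult_frac integral_iff, rule frac_eqI, algebra, simp_all add: integral_iff)
next
  fix x assume "x \<in> frac_carrier R"
  then show "frac_mult R (frac_class R \<one> \<one>) x = x"
    by (elim frac_carrierE) (simp add: frac_mult_frac integral_iff)
qed

lemma frac_field_cring: "cring (frac_field R)"
proof (rule cringI[OF frac_field_abelian_group frac_field_comm_monoid])
  fix x y z assume "x \<in> carrier (frac_field R)" "y \<in> carrier (frac_field R)" "z \<in> carrier (frac_field R)"
  then show "(x \<oplus>\<^bsub>frac_field R\<^esub> y) \<otimes>\<^bsub>frac_field R\<^esub> z = x \<otimes>\<^bsub>frac_field R\<^esub> z \<oplus>\<^bsub>frac_field R\<^esub> y \<otimes>\<^bsub>frac_field R\<^esub> z"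
    by (simp, elim frac_carrierE) (simp add: frac_mult_frac frac_add_frac integral_iff, rule frac_eqI, algebra, simp_all add: integral_iff)
qed

lemma frac_eq_zero_iff:
  "a \<in> carrier R \<Longrightarrow> b \<in> carrier R \<Longrightarrow> b \<noteq> \<zero> \<Longrightarrow> frac_class R a b = frac_class R \<zero> \<one> \<longleftrightarrow> a = \<zero>"
  by (simp add: frac_eq)

lemma frac_field_field: "field (frac_field R)"
proof (rule cring.cring_fieldI2[OF frac_field_cring])
  show "\<zero>\<^bsub>frac_field R\<^esub> \<noteq> \<one>\<^bsub>frac_field R\<^esub>" using frac_eq_zero_iff[of \<one> \<one>] by auto
next
  fix x assume "x \<in> carrier (frac_field R)" "x \<noteq> \<zero>\<^bsub>frac_field R\<^esub>"
  then obtain a b where ab: "a \<in> carrier R" "b \<in> carrier R" "b \<noteq> \<zero>" "x = frac_class R a b"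
    using frac_carrierE by (metis frac_field_simps(1))
  with \<open>x \<noteq> \<zero>\<^bsub>frac_field R\<^esub>\<close> have "a \<noteq> \<zero>" using frac_eq_zero_iff by auto
  note ab = ab this
  have "frac_mult R x (frac_class R b a) = frac_class R (a \<otimes> b) (b \<otimes> a)"
    using ab by (simp add: frac_mult_frac)
  also have "\<dots> = frac_class R \<one> \<one>"
    by (rule frac_eqI) (use ab in \<open>algebra\<close>, use ab in \<open>simp_all add: integral_iff\<close>)
  finally have "frac_mult R x (frac_class R b a) = frac_class R \<one> \<one>" .
  then show "\<exists>y\<in>carrier (frac_field R). x \<otimes>\<^bsub>frac_field R\<^esub> y = \<one>\<^bsub>frac_field R\<^esub>"
    using ab frac_in_carrier[of b a] by auto
qed

lemma frac_class_quotient: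
  assumes ab: "a \<in> carrier R" "b \<in> carrier R" "b \<noteq> \<zero>"
  shows "frac_class R a b =
    frac_class R a \<one> \<otimes>\<^bsub>frac_field R\<^esub> inv\<^bsub>frac_field R\<^esub> (frac_class R b \<one>)"
proof -
  interpret F: field "frac_field R" by (rule frac_field_field)
  let ?F = "frac_field R"
  have in_F: "frac_class R b \<one> \<in> carrier ?F" "frac_class R \<one> b \<in> carrier ?F"
    using ab by (simp_all add: frac_in_carrier)
  have "frac_class R b \<one> \<otimes>\<^bsub>?F\<^esub> frac_class R \<one> b = \<one>\<^bsub>?F\<^esub>"
    and "frac_class R \<one> b \<otimes>\<^bsub>?F\<^esub> frac_class R b \<one> = \<one>\<^bsub>?F\<^esub>"
    using ab frac_mult_frac[of b \<one> \<one> b] frac_mult_frac[of \<one> b b \<one>] frac_eq[of b b \<one> \<one>] by simp_all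
  then have "frac_class R \<one> b = inv\<^bsub>?F\<^esub> (frac_class R b \<one>)"
    by (rule F.inv_unique'[OF in_F])
  moreover have "frac_class R a \<one> \<otimes>\<^bsub>?F\<^esub> frac_class R \<one> b = frac_class R a b"
    using ab frac_mult_frac[of a \<one> \<one> b] by simp
  ultimately show ?thesis by simp
qed

lemma frac_field_is_fraction_field: "is_fraction_field R (frac_field R) (\<lambda>a. frac_class R a \<one>)"
proof -
  have hom: "(\<lambda>a. frac_class R a \<one>) \<in> ring_hom R (frac_field R)"
  proof (rule ring_hom_memI)
    fix x assume "x \<in> carrier R"
    then show "frac_class R x \<one> \<in> carrier (frac_field R)" by (simp add: frac_in_carrier)
  next
    fix x y assume "x \<in> carrier R" "y \<in> carrier R"
    then show "frac_class R (x \<otimes> y) \<one> = frac_class R x \<one> \<otimes>\<^bsub>frac_field R\<^esub> frac_class R y \<one>"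
      by (simp add: frac_mult_frac)
  next
    fix x y assume "x \<in> carrier R" "y \<in> carrier R"
    then show "frac_class R (x \<oplus> y) \<one> = frac_class R x \<one> \<oplus>\<^bsub>frac_field R\<^esub> frac_class R y \<one>"
      by (simp add: frac_add_frac)
  qed simp
  have inj: "inj_on (\<lambda>a. frac_class R a \<one>) (carrier R)"
  proof (rule inj_onI)
    fix x y assume "x \<in> carrier R" "y \<in> carrier R" "frac_class R x \<one> = frac_class R y \<one>"
    then show "x = y" using frac_eq[of x \<one> y \<one>] by simp
  qed
  have "\<exists>a\<in>carrier R. \<exists>b\<in>carrier R. b \<noteq> \<zero> \<and>
      k = frac_class R a \<one> \<otimes>\<^bsub>frac_field R\<^esub> inv\<^bsub>frac_field R\<^esub> (frac_class R b \<one>)"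
    if "k \<in> carrier (frac_field R)" for k
  proof -
    have "k \<in> frac_carrier R" using that by simp
    then obtain a b where ab: "a \<in> carrier R" "b \<in> carrier R" "b \<noteq> \<zero>" "k = frac_class R a b"
      by (rule frac_carrierE)
    then show ?thesis using frac_class_quotient[OF ab(1-3)] by blast
  qed
  then show ?thesis unfolding is_fraction_field_def
    using domain_axioms hom inj frac_field_field by blast
qed

end

text \<open>Clearing denominators.  \<open>scale_coeffs R u k p\<close> multiplies the coefficient of \<open>p\<close> in
  position \<open>i\<close> (counted from the leading one) by \<open>u\<^sup>k\<^sup>+\<^sup>i\<close>.  For \<open>k = 0\<close> and
  \<open>deg p = n\<close> this is \<open>u\<^sup>n p(X / u)\<close>, so its roots are the roots of \<open>p\<close> multiplied by \<open>u\<close>.\<close>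
fun scale_coeffs :: "('a, 'm) ring_scheme \<Rightarrow> 'a \<Rightarrow> nat \<Rightarrow> 'a list \<Rightarrow> 'a list" where
  "scale_coeffs R u k [] = []"
| "scale_coeffs R u k (c # p) = (c \<otimes>\<^bsub>R\<^esub> u [^]\<^bsub>R\<^esub> k) # scale_coeffs R u (Suc k) p"

lemma length_scale_coeffs [simp]: "length (scale_coeffs R u k p) = length p"
  by (induct p arbitrary: k) auto

lemma (in cring) set_scale_coeffs:
  "set p \<subseteq> carrier R \<Longrightarrow> u \<in> carrier R \<Longrightarrow> set (scale_coeffs R u k p) \<subseteq> carrier R"
  by (induct p arbitrary: k) auto

lemma (in cring) eval_scale_coeffs:
  assumes "set p \<subseteq> carrier R" "u \<in> carrier R" "x \<in> carrier R"
  shows "u \<otimes> eval (scale_coeffs R u k p) (u \<otimes> x) = u [^] (k + length p) \<otimes> eval p x"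
  using assms(1)
proof (induct p arbitrary: k)
  case Nil then show ?case using assms by simp
next
  case (Cons c p)
  let ?m = "length p" and ?e = "eval (scale_coeffs R u (Suc k) p) (u \<otimes> x)"
  have c: "c \<in> carrier R" and p: "set p \<subseteq> carrier R" using Cons by auto
  have e: "?e \<in> carrier R"
    using eval_in_carrier[OF set_scale_coeffs[OF p assms(2)]] assms by simp
  have "u \<otimes> eval (scale_coeffs R u k (c # p)) (u \<otimes> x)
      = u \<otimes> ((c \<otimes> u [^] k) \<otimes> (u [^] ?m \<otimes> x [^] ?m)) \<oplus> u \<otimes> ?e"
    using assms c e by (simp add: nat_pow_distrib r_distr)
  also have "u \<otimes> ?e = u [^] (Suc k + ?m) \<otimes> eval p x"
    using Cons(1)[OF p] .
  also have "u \<otimes> ((c \<otimes> u [^] k) \<otimes> (u [^] ?m \<otimes> x [^] ?m)) = u [^] (Suc k + ?m) \<otimes> (c \<otimes> x [^] ?m)"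
  proof -
    have "u \<otimes> ((c \<otimes> u [^] k) \<otimes> (u [^] ?m \<otimes> x [^] ?m)) = (u [^] k \<otimes> u [^] ?m \<otimes> u) \<otimes> (c \<otimes> x [^] ?m)"
      using assms c by (simp add: m_ac)
    also have "u [^] k \<otimes> u [^] ?m \<otimes> u = u [^] (Suc k + ?m)"
      using assms by (simp add: nat_pow_mult)
    finally show ?thesis .
  qed
  also have "u [^] (Suc k + ?m) \<otimes> (c \<otimes> x [^] ?m) \<oplus> u [^] (Suc k + ?m) \<otimes> eval p x
      = u [^] (k + length (c # p)) \<otimes> eval (c # p) x"
    using assms c eval_in_carrier[OF p assms(3)] by (simp add: r_distr)
  finally show ?case .
qed

lemma (in domain) pow_nonzero: "x \<in> carrier R \<Longrightarrow> x \<noteq> \<zero> \<Longrightarrow> x [^] (n::nat) \<noteq> \<zero>"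
  by (induct n) (auto simp: integral_iff)

locale fraction_field =
  fixes D :: "('a, 'm) ring_scheme" and K :: "('b, 'n) ring_scheme" and \<iota> :: "'a \<Rightarrow> 'b"
  assumes is_fraction_field: "is_fraction_field D K \<iota>"
begin

lemma domain: "domain D" and field: "field K" and hom: "\<iota> \<in> ring_hom D K"
  and inj: "inj_on \<iota> (carrier D)"
  and fractions: "\<And>k. k \<in> carrier K \<Longrightarrow> \<exists>a\<in>carrier D. \<exists>b\<in>carrier D. b \<noteq> \<zero>\<^bsub>D\<^esub> \<and>
      k = \<iota> a \<otimes>\<^bsub>K\<^esub> inv\<^bsub>K\<^esub> (\<iota> b)"
  using is_fraction_field unfolding is_fraction_field_def by auto

sublocale D: domain D by (rule domain)
sublocale K: field K by (rule field)
sublocale H: ring_hom_ring D K \<iota> using ring_hom_ringI2[OF D.ring_axioms K.ring_axioms hom] .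

lemma image_nonzero: "b \<in> carrier D \<Longrightarrow> b \<noteq> \<zero>\<^bsub>D\<^esub> \<Longrightarrow> \<iota> b \<noteq> \<zero>\<^bsub>K\<^esub>"
  using inj unfolding inj_on_def by (metis D.zero_closed H.hom_zero)

lemma common_denominator:
  assumes "set p \<subseteq> carrier K"
  shows "\<exists>t\<in>carrier D. t \<noteq> \<zero>\<^bsub>D\<^esub> \<and> (\<forall>y\<in>set p. \<iota> t \<otimes>\<^bsub>K\<^esub> y \<in> \<iota> ` carrier D)"
  using assms
proof (induct p)
  case Nil then show ?case by (intro bexI[of _ "\<one>\<^bsub>D\<^esub>"]) auto
next
  case (Cons y p)
  have yK: "y \<in> carrier K" and pK: "set p \<subseteq> carrier K" using Cons.prems by auto
  obtain t where t: "t \<in> carrier D" "t \<noteq> \<zero>\<^bsub>D\<^esub>" "\<forall>y\<in>set p. \<iota> t \<otimes>\<^bsub>K\<^esub> y \<in> \<iota> ` carrier D"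
    using Cons.hyps[OF pK] by blast
  obtain a b where ab: "a \<in> carrier D" "b \<in> carrier D" "b \<noteq> \<zero>\<^bsub>D\<^esub>" "y = \<iota> a \<otimes>\<^bsub>K\<^esub> inv\<^bsub>K\<^esub> (\<iota> b)"
    using fractions[OF yK] by blast
  have b_unit: "\<iota> b \<in> Units K"
    using H.hom_closed[OF ab(2)] image_nonzero[OF ab(2,3)] K.field_Units by auto
  define v where "v = inv\<^bsub>K\<^esub> (\<iota> b)"
  have v: "v \<in> carrier K" "\<iota> b \<otimes>\<^bsub>K\<^esub> v = \<one>\<^bsub>K\<^esub>"
    using b_unit unfolding v_def by simp_all
  have "\<iota> (t \<otimes>\<^bsub>D\<^esub> b) \<otimes>\<^bsub>K\<^esub> y = \<iota> t \<otimes>\<^bsub>K\<^esub> \<iota> a \<otimes>\<^bsub>K\<^esub> (\<iota> b \<otimes>\<^bsub>K\<^esub> v)"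
    using ab t(1) v(1) unfolding v_def[symmetric] by (simp add: K.m_ac)
  also have "\<dots> = \<iota> (t \<otimes>\<^bsub>D\<^esub> a)" using ab(1) t(1) v(2) by simp
  finally have new: "\<iota> (t \<otimes>\<^bsub>D\<^esub> b) \<otimes>\<^bsub>K\<^esub> y \<in> \<iota> ` carrier D" using ab(1) t(1) by blast
  have old: "\<iota> (t \<otimes>\<^bsub>D\<^esub> b) \<otimes>\<^bsub>K\<^esub> z \<in> \<iota> ` carrier D" if z: "z \<in> set p" for z
  proof -
    obtain s where s: "s \<in> carrier D" "\<iota> t \<otimes>\<^bsub>K\<^esub> z = \<iota> s" using t(3) z by blast
    have "\<iota> (t \<otimes>\<^bsub>D\<^esub> b) \<otimes>\<^bsub>K\<^esub> z = \<iota> b \<otimes>\<^bsub>K\<^esub> (\<iota> t \<otimes>\<^bsub>K\<^esub> z)"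
      using ab(2) t(1) z pK by (simp add: K.m_ac subsetD)
    also have "\<dots> = \<iota> (b \<otimes>\<^bsub>D\<^esub> s)" using ab(2) s by simp
    finally show ?thesis using s(1) ab(2) by blast
  qed
  have "t \<otimes>\<^bsub>D\<^esub> b \<in> carrier D" "t \<otimes>\<^bsub>D\<^esub> b \<noteq> \<zero>\<^bsub>D\<^esub>"
    using t(1,2) ab(2,3) D.integral_iff by auto
  then show ?case using new old by auto
qed

lemma scale_coeffs_in_image:
  assumes t: "t \<in> carrier D" and k: "k \<ge> 1" and p: "set p \<subseteq> carrier K"
    and den: "\<forall>y\<in>set p. \<iota> t \<otimes>\<^bsub>K\<^esub> y \<in> \<iota> ` carrier D"
  shows "set (scale_coeffs K (\<iota> t) k p) \<subseteq> \<iota> ` carrier D"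
  using k p den
proof (induct p arbitrary: k)
  case Nil then show ?case by simp
next
  case (Cons y p)
  obtain s where s: "s \<in> carrier D" "\<iota> t \<otimes>\<^bsub>K\<^esub> y = \<iota> s" using Cons.prems(3) by auto
  obtain k' where k': "k = Suc k'" using Cons.prems(1) by (cases k) auto
  have "y \<otimes>\<^bsub>K\<^esub> \<iota> t [^]\<^bsub>K\<^esub> k = (\<iota> t \<otimes>\<^bsub>K\<^esub> y) \<otimes>\<^bsub>K\<^esub> \<iota> t [^]\<^bsub>K\<^esub> k'"
    using Cons.prems(2) t k' by (simp add: K.m_ac)
  also have "\<dots> = \<iota> (s \<otimes>\<^bsub>D\<^esub> t [^]\<^bsub>D\<^esub> k')" using s t by (simp add: H.hom_nat_pow)
  finally have "y \<otimes>\<^bsub>K\<^esub> \<iota> t [^]\<^bsub>K\<^esub> k \<in> \<iota> ` carrier D" using s t by blast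
  moreover have "set (scale_coeffs K (\<iota> t) (Suc k) p) \<subseteq> \<iota> ` carrier D" using Cons by auto
  ultimately show ?case by simp
qed

text \<open>The monic roots property passes from \<open>D\<close> to its field of fractions: after
  clearing denominators, a monic polynomial over \<open>K\<close> becomes (the image of) a monic
  polynomial over \<open>D\<close>, whose root in \<open>D\<close> yields a root of the original one.\<close>
lemma monic_roots_fraction_field:
  assumes roots: "monic_roots D"
  shows "monic_roots K"
  unfolding monic_roots_def
proof (intro allI impI, elim conjE)
  fix p assume p: "set p \<subseteq> carrier K" "p \<noteq> []" "hd p = \<one>\<^bsub>K\<^esub>" "2 \<le> length p"
  obtain r where r: "p = \<one>\<^bsub>K\<^esub> # r" using p(2,3) by (cases p) auto
  have r_set: "set r \<subseteq> carrier K" using p(1) r by auto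
  obtain t where t: "t \<in> carrier D" "t \<noteq> \<zero>\<^bsub>D\<^esub>" "\<forall>y\<in>set r. \<iota> t \<otimes>\<^bsub>K\<^esub> y \<in> \<iota> ` carrier D"
    using common_denominator[OF r_set] by blast
  let ?u = "\<iota> t" and ?p' = "scale_coeffs K (\<iota> t) 0 p"
  have u: "?u \<in> carrier K" "?u \<noteq> \<zero>\<^bsub>K\<^esub>" "?u \<in> Units K"
    using t image_nonzero K.field_Units by auto
  have p': "?p' = \<one>\<^bsub>K\<^esub> # scale_coeffs K ?u 1 r" using r u(1) by simp
  have p'_ne: "?p' \<noteq> []" and p'_hd: "hd ?p' = \<one>\<^bsub>K\<^esub>" using p' by simp_all
  have "set (tl ?p') \<subseteq> \<iota> ` carrier D"
    using scale_coeffs_in_image[OF t(1) _ r_set t(3)] p' by simp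
  then obtain q where q: "set q \<subseteq> carrier D" "q \<noteq> []" "hd q = \<one>\<^bsub>D\<^esub>" "map \<iota> q = ?p'"
      "length q = length ?p'"
    using lift_monic[OF D.ring_axioms hom p'_ne p'_hd] by blast
  then obtain a where a: "a \<in> carrier D" "D.eval q a = \<zero>\<^bsub>D\<^esub>"
    using roots p(4) unfolding monic_roots_def by auto
  have root': "K.eval ?p' (\<iota> a) = \<zero>\<^bsub>K\<^esub>"
    using H.eval_hom'[OF a(1) q(1)] q(4) a(2) by simp
  define x where "x = inv\<^bsub>K\<^esub> ?u \<otimes>\<^bsub>K\<^esub> \<iota> a"
  have x: "x \<in> carrier K" "?u \<otimes>\<^bsub>K\<^esub> x = \<iota> a"
  proof -
    show "x \<in> carrier K" using u(3) a(1) unfolding x_def by simp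
    have "?u \<otimes>\<^bsub>K\<^esub> x = (?u \<otimes>\<^bsub>K\<^esub> inv\<^bsub>K\<^esub> ?u) \<otimes>\<^bsub>K\<^esub> \<iota> a"
      unfolding x_def by (rule K.m_assoc[symmetric]) (use u(3) a(1) in auto)
    then show "?u \<otimes>\<^bsub>K\<^esub> x = \<iota> a" using u(3) a(1) by simp
  qed
  have "?u [^]\<^bsub>K\<^esub> length p \<otimes>\<^bsub>K\<^esub> K.eval p x = \<zero>\<^bsub>K\<^esub>"
    using K.eval_scale_coeffs[OF p(1) u(1) x(1), of 0] x(2) root' u(1) by simp
  then have "K.eval p x = \<zero>\<^bsub>K\<^esub>"
    using K.pow_nonzero[OF u(1,2)] K.integral_iff u(1) K.eval_in_carrier[OF p(1) x(1)] by auto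
  then show "\<exists>x\<in>carrier K. K.eval p x = \<zero>\<^bsub>K\<^esub>" using x(1) by blast
qed

text \<open>If \<open>D\<close> has the monic roots property, it is integrally closed in \<open>K\<close>: an element of
  \<open>K\<close> integral over \<open>\<iota>(D)\<close> is a root of the image of a monic polynomial over \<open>D\<close>.\<close>
lemma integrally_closed:
  assumes roots: "monic_roots D" and k: "k \<in> carrier K" "integral_over K (\<iota> ` carrier D) k"
  shows "k \<in> \<iota> ` carrier D"
proof -
  obtain p where p: "polynomial\<^bsub>K\<^esub> (\<iota> ` carrier D) p" "p \<noteq> []" "hd p = \<one>\<^bsub>K\<^esub>"
      "K.eval p k = \<zero>\<^bsub>K\<^esub>"
    using k(2) unfolding integral_over_def by blast
  have "set (tl p) \<subseteq> \<iota> ` carrier D" using p(1,2) unfolding polynomial_def by (cases p) auto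
  then obtain q where "set q \<subseteq> carrier D" "q \<noteq> []" "hd q = \<one>\<^bsub>D\<^esub>" "map \<iota> q = p"
    using lift_monic[OF D.ring_axioms hom p(2,3)] by blast
  then show ?thesis
    using monic_root_in_image[OF domain K.domain_axioms hom roots _ _ _ k(1)] p(4) by blast
qed

end

text \<open>For the converse direction the
  explicit field of fractions \<open>frac_field A\<close> serves as witness.\<close>
lemma aic_domain_iff_monic_roots: "aic_domain A \<longleftrightarrow> domain A \<and> monic_roots A"
proof
  assume "aic_domain A"
  then show "domain A \<and> monic_roots A"
    using aic_domain_monic_roots unfolding aic_domain_def by blast
next
  assume A: "domain A \<and> monic_roots A"
  then interpret F: fraction_field A "frac_field A" "\<lambda>a. frac_class A a \<one>\<^bsub>A\<^esub>"
    by (simp add: fraction_field_def domain.frac_field_is_fraction_field)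
  have "algebraically_closed (frac_field A)"
    using field_monic_roots_algebraically_closed[OF F.field F.monic_roots_fraction_field] A by simp
  moreover have "\<forall>k\<in>carrier (frac_field A).
      integral_over (frac_field A) ((\<lambda>a. frac_class A a \<one>\<^bsub>A\<^esub>) ` carrier A) k \<longrightarrow>
      k \<in> (\<lambda>a. frac_class A a \<one>\<^bsub>A\<^esub>) ` carrier A"
    using F.integrally_closed A by simp
  ultimately show "aic_domain A"
    unfolding aic_domain_def using A F.is_fraction_field by blast
qed

theorem mainTheorem19:
  fixes R :: "'a ring" and D :: "'b ring" and \<phi> :: "'a \<Rightarrow> 'b"
  assumes "cring R" and "aic_ring R"
    and "domain D"
    and "\<phi> \<in> ring_hom R D"
    and "integral_hom R D \<phi>"
  shows "\<phi> ` carrier R = carrier D \<and> aic_domain D"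
proof -
  obtain As :: "'a set ring list" and f where As: "\<forall>A\<in>set As. aic_domain A"
    and f: "f \<in> ring_iso R (RDirProd_list As)"
    using assms(2) unfolding aic_ring_def is_ring_iso_def by blast
  let ?g = "inv_into (carrier R) f"
  have g: "?g \<in> ring_iso (RDirProd_list As) R"
    using ring_iso_set_sym[OF cring.axioms(1)[OF assms(1)] f] .
  then have \<psi>: "\<phi> \<circ> ?g \<in> ring_hom (RDirProd_list As) D"
    using ring_hom_trans[OF _ assms(4)] unfolding ring_iso_def by blast
  have "(\<phi> \<circ> ?g) ` carrier (RDirProd_list As) = \<phi> ` carrier R"
    using g unfolding ring_iso_def bij_betw_def image_comp[symmetric] by simp
  moreover have "\<forall>A\<in>set As. ring A"
    using As unfolding aic_domain_def by (auto intro: domain.axioms(1) cring.axioms(1))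
  ultimately obtain A \<theta> where A: "A \<in> set As" and \<theta>: "\<theta> \<in> ring_hom A D"
    and img: "\<theta> ` carrier A = \<phi> ` carrier R"
    using ring_hom_RDirProd_list_factor[OF _ \<psi> assms(3)] by metis
  have A_dom: "domain A" and A_roots: "monic_roots A"
    using As A aic_domain_iff_monic_roots by blast+
  have surj: "\<theta> ` carrier A = carrier D"
    using integral_hom_surjective[OF A_dom A_roots assms(3) \<theta>] assms(5) img
    unfolding integral_hom_def by simp
  have "monic_roots D"
    using monic_roots_surjective_image[OF domain.axioms(1)[OF A_dom, THEN cring.axioms(1)]
        domain.axioms(1)[OF assms(3), THEN cring.axioms(1)] \<theta> surj A_roots] .
  then show ?thesis using surj img assms(3) aic_domain_iff_monic_roots[of D] by simp
qed

end
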